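(* Let $(M_i)_{i\in I}$ be a family of objects of an abelian category $\mathcal{A}$. (1) Assume that the product $\prod_{i\in I} M_i$ exists and is a strongly self-Rickart object. Then $M_i$ is strongly $M_j$-Rickart for every $i,j\in I$. (2) Assume that the coproduct $\bigoplus_{i\in I} M_i$ exists and is a dual strongly self-Rickart object. Then $M_i$ is dual strongly $M_j$-Rickart for every $i,j\in I$.
   Context: A morphism $f:X\to Y$ is a section if $f'f=1_X$ for some $f'$, a retraction if $ff'=1_Y$ for some $f'$. A monomorphism $k:K\to X$ is fully invariant if for every $h:X\to X$ there is $\alpha:K\to K$ with $hk=k\alpha$; an epimorphism $c:X\to C$ is fully coinvariant if for every $h:X\to X$ there is $\gamma:C\to C$ with $ch=\gamma c$. For objects $M,N$: $N$ is strongly $M$-Rickart if the kernel of every morphism $f:M\to N$ is a fully invariant section; $N$ is dual strongly $M$-Rickart if the cokernel of every morphism $f:M\to N$ is a fully coinvariant retraction. An object is (dual) strongly self-Rickart if it is (dual) strongly Rickart relative to itself. *)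

theory Defs
  imports "HOL-Algebra.Group"
begin

text \<open>An (additive) category presented by objects, arrows with source/target,
  partial composition (cmp g f = g after f), identities, and for the
  preadditive structure a binary addition on arrows and zero arrows.\<close>

record ('o, 'm) acat =
  ob  :: "'o set"
  ar  :: "'m set"
  src :: "'m \<Rightarrow> 'o"
  tgt :: "'m \<Rightarrow> 'o"
  cmp :: "'m \<Rightarrow> 'm \<Rightarrow> 'm"
  idm :: "'o \<Rightarrow> 'm"
  add :: "'m \<Rightarrow> 'm \<Rightarrow> 'm"
  zer :: "'o \<Rightarrow> 'o \<Rightarrow> 'm"

definition Hom :: "('o, 'm) acat \<Rightarrow> 'o \<Rightarrow> 'o \<Rightarrow> 'm set" where
  "Hom C X Y = {f \<in> ar C. src C f = X \<and> tgt C f = Y}"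

definition is_category :: "('o, 'm) acat \<Rightarrow> bool" where
  "is_category C \<longleftrightarrow>
     (\<forall>f \<in> ar C. src C f \<in> ob C \<and> tgt C f \<in> ob C) \<and>
     (\<forall>X \<in> ob C. idm C X \<in> Hom C X X) \<and>
     (\<forall>X \<in> ob C. \<forall>Y \<in> ob C. \<forall>Z \<in> ob C. \<forall>f \<in> Hom C X Y. \<forall>g \<in> Hom C Y Z.
        cmp C g f \<in> Hom C X Z) \<and>
     (\<forall>f \<in> ar C. \<forall>g \<in> ar C. \<forall>h \<in> ar C. tgt C f = src C g \<longrightarrow> tgt C g = src C h \<longrightarrow>
        cmp C h (cmp C g f) = cmp C (cmp C h g) f) \<and>
     (\<forall>f \<in> ar C. cmp C f (idm C (src C f)) = f \<and> cmp C (idm C (tgt C f)) f = f)"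

definition hom_group :: "('o, 'm) acat \<Rightarrow> 'o \<Rightarrow> 'o \<Rightarrow> 'm monoid" where
  "hom_group C X Y = \<lparr>carrier = Hom C X Y, mult = add C, one = zer C X Y\<rparr>"

definition is_preadditive :: "('o, 'm) acat \<Rightarrow> bool" where
  "is_preadditive C \<longleftrightarrow> is_category C \<and>
     (\<forall>X \<in> ob C. \<forall>Y \<in> ob C. comm_group (hom_group C X Y)) \<and>
     (\<forall>X \<in> ob C. \<forall>Y \<in> ob C. \<forall>Z \<in> ob C. \<forall>f \<in> Hom C X Y. \<forall>g \<in> Hom C Y Z. \<forall>g' \<in> Hom C Y Z.
        cmp C (add C g g') f = add C (cmp C g f) (cmp C g' f)) \<and>
     (\<forall>X \<in> ob C. \<forall>Y \<in> ob C. \<forall>Z \<in> ob C. \<forall>f \<in> Hom C X Y. \<forall>f' \<in> Hom C X Y. \<forall>g \<in> Hom C Y Z.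
        cmp C g (add C f f') = add C (cmp C g f) (cmp C g f'))"

definition mono :: "('o, 'm) acat \<Rightarrow> 'm \<Rightarrow> bool" where
  "mono C m \<longleftrightarrow> m \<in> ar C \<and>
     (\<forall>g \<in> ar C. \<forall>h \<in> ar C. tgt C g = src C m \<longrightarrow> tgt C h = src C m \<longrightarrow> src C g = src C h \<longrightarrow>
        cmp C m g = cmp C m h \<longrightarrow> g = h)"

definition epi :: "('o, 'm) acat \<Rightarrow> 'm \<Rightarrow> bool" where
  "epi C e \<longleftrightarrow> e \<in> ar C \<and>
     (\<forall>g \<in> ar C. \<forall>h \<in> ar C. src C g = tgt C e \<longrightarrow> src C h = tgt C e \<longrightarrow> tgt C g = tgt C h \<longrightarrow>
        cmp C g e = cmp C h e \<longrightarrow> g = h)"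

definition is_kernel :: "('o, 'm) acat \<Rightarrow> 'm \<Rightarrow> 'm \<Rightarrow> bool" where
  "is_kernel C f k \<longleftrightarrow> f \<in> ar C \<and> k \<in> ar C \<and> tgt C k = src C f \<and>
     cmp C f k = zer C (src C k) (tgt C f) \<and>
     (\<forall>g \<in> ar C. tgt C g = src C f \<longrightarrow> cmp C f g = zer C (src C g) (tgt C f) \<longrightarrow>
        (\<exists>!u. u \<in> Hom C (src C g) (src C k) \<and> cmp C k u = g))"

definition is_cokernel :: "('o, 'm) acat \<Rightarrow> 'm \<Rightarrow> 'm \<Rightarrow> bool" where
  "is_cokernel C f c \<longleftrightarrow> f \<in> ar C \<and> c \<in> ar C \<and> src C c = tgt C f \<and>
     cmp C c f = zer C (src C f) (tgt C c) \<and>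
     (\<forall>g \<in> ar C. src C g = tgt C f \<longrightarrow> cmp C g f = zer C (src C f) (tgt C g) \<longrightarrow>
        (\<exists>!u. u \<in> Hom C (tgt C c) (tgt C g) \<and> cmp C u c = g))"

definition is_product :: "('o, 'm) acat \<Rightarrow> 'i set \<Rightarrow> ('i \<Rightarrow> 'o) \<Rightarrow> 'o \<Rightarrow> ('i \<Rightarrow> 'm) \<Rightarrow> bool" where
  "is_product C I M P p \<longleftrightarrow> P \<in> ob C \<and> (\<forall>i \<in> I. p i \<in> Hom C P (M i)) \<and>
     (\<forall>X \<in> ob C. \<forall>f. (\<forall>i \<in> I. f i \<in> Hom C X (M i)) \<longrightarrow>
        (\<exists>!u. u \<in> Hom C X P \<and> (\<forall>i \<in> I. cmp C (p i) u = f i)))"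

definition is_coproduct :: "('o, 'm) acat \<Rightarrow> 'i set \<Rightarrow> ('i \<Rightarrow> 'o) \<Rightarrow> 'o \<Rightarrow> ('i \<Rightarrow> 'm) \<Rightarrow> bool" where
  "is_coproduct C I M S s \<longleftrightarrow> S \<in> ob C \<and> (\<forall>i \<in> I. s i \<in> Hom C (M i) S) \<and>
     (\<forall>X \<in> ob C. \<forall>f. (\<forall>i \<in> I. f i \<in> Hom C (M i) X) \<longrightarrow>
        (\<exists>!u. u \<in> Hom C S X \<and> (\<forall>i \<in> I. cmp C u (s i) = f i)))"

definition is_abelian :: "('o, 'm) acat \<Rightarrow> bool" where
  "is_abelian C \<longleftrightarrow> is_preadditive C \<and>
     (\<exists>Z \<in> ob C. idm C Z = zer C Z Z) \<and>
     (\<forall>X \<in> ob C. \<forall>Y \<in> ob C. \<exists>P p. is_product C (UNIV :: bool set) (\<lambda>b. if b then X else Y) P p) \<and>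
     (\<forall>f \<in> ar C. \<exists>k. is_kernel C f k) \<and>
     (\<forall>f \<in> ar C. \<exists>c. is_cokernel C f c) \<and>
     (\<forall>m. mono C m \<longrightarrow> (\<exists>f. is_kernel C f m)) \<and>
     (\<forall>e. epi C e \<longrightarrow> (\<exists>f. is_cokernel C f e))"

definition is_section :: "('o, 'm) acat \<Rightarrow> 'm \<Rightarrow> bool" where
  "is_section C f \<longleftrightarrow> f \<in> ar C \<and>
     (\<exists>f' \<in> Hom C (tgt C f) (src C f). cmp C f' f = idm C (src C f))"

definition is_retraction :: "('o, 'm) acat \<Rightarrow> 'm \<Rightarrow> bool" where
  "is_retraction C f \<longleftrightarrow> f \<in> ar C \<and>
     (\<exists>f' \<in> Hom C (tgt C f) (src C f). cmp C f f' = idm C (tgt C f))"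

definition fully_invariant :: "('o, 'm) acat \<Rightarrow> 'm \<Rightarrow> bool" where
  "fully_invariant C k \<longleftrightarrow> mono C k \<and>
     (\<forall>h \<in> Hom C (tgt C k) (tgt C k). \<exists>\<alpha> \<in> Hom C (src C k) (src C k). cmp C h k = cmp C k \<alpha>)"

definition fully_coinvariant :: "('o, 'm) acat \<Rightarrow> 'm \<Rightarrow> bool" where
  "fully_coinvariant C c \<longleftrightarrow> epi C c \<and>
     (\<forall>h \<in> Hom C (src C c) (src C c). \<exists>\<gamma> \<in> Hom C (tgt C c) (tgt C c). cmp C c h = cmp C \<gamma> c)"

text \<open>strongly_rickart C M N: N is strongly M-Rickart\<close>
definition strongly_rickart :: "('o, 'm) acat \<Rightarrow> 'o \<Rightarrow> 'o \<Rightarrow> bool" where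
  "strongly_rickart C M N \<longleftrightarrow>
     (\<forall>f \<in> Hom C M N. \<forall>k. is_kernel C f k \<longrightarrow> fully_invariant C k \<and> is_section C k)"

text \<open>dual_strongly_rickart C M N: N is dual strongly M-Rickart\<close>
definition dual_strongly_rickart :: "('o, 'm) acat \<Rightarrow> 'o \<Rightarrow> 'o \<Rightarrow> bool" where
  "dual_strongly_rickart C M N \<longleftrightarrow>
     (\<forall>f \<in> Hom C M N. \<forall>c. is_cokernel C f c \<longrightarrow> fully_coinvariant C c \<and> is_retraction C c)"

end

theory Submission
  imports Defs
begin

text \<open>Every component \<open>M\<^sub>i\<close> of a product \<open>P\<close> is a retract of \<open>P\<close>, and the strong Rickart
  property descends to retracts: if \<open>M\<close>, \<open>N\<close> are retracts of \<open>P\<close>, \<open>Q\<close> via \<open>e, p\<close> and \<open>e', p'\<close>,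
  then for \<open>f : M \<rightarrow> N\<close> the kernel \<open>K\<close> of \<open>f\<close> and the kernel \<open>K'\<close> of \<open>g = e' f p : P \<rightarrow> Q\<close>
  are linked by comparison maps \<open>\<phi> : K \<rightarrow> K'\<close>, \<open>\<psi> : K' \<rightarrow> K\<close> with \<open>\<psi> \<phi> = 1\<close>, through which a
  retraction of \<open>K' \<rightarrow> P\<close> and the full invariance of \<open>K'\<close> transfer to \<open>K \<rightarrow> M\<close>.
  The coproduct half is the product half in the opposite category, where kernels become
  cokernels, sections retractions and full invariance full coinvariance.\<close>

definition opposite :: "('o, 'm) acat \<Rightarrow> ('o, 'm) acat" where
  "opposite C = C\<lparr>src := tgt C, tgt := src C, cmp := \<lambda>g f. cmp C f g, zer := \<lambda>X Y. zer C Y X\<rparr>"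

lemma opposite_simps [simp]:
  "ob (opposite C) = ob C" "ar (opposite C) = ar C"
  "src (opposite C) = tgt C" "tgt (opposite C) = src C"
  "cmp (opposite C) g f = cmp C f g" "idm (opposite C) = idm C"
  "add (opposite C) = add C" "zer (opposite C) X Y = zer C Y X"
  by (simp_all add: opposite_def)

lemma Hom_opposite [simp]: "Hom (opposite C) X Y = Hom C Y X"
  by (auto simp: Hom_def)

lemma hom_group_opposite: "hom_group (opposite C) X Y = hom_group C Y X"
  by (simp add: hom_group_def)

lemma is_preadditive_opposite:
  assumes "is_preadditive C"
  shows "is_preadditive (opposite C)"
  using assms unfolding is_preadditive_def is_category_def hom_group_opposite
  by (auto simp: Hom_def)

lemma is_kernel_opposite: "is_kernel (opposite C) f k \<longleftrightarrow> is_cokernel C f k"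
  by (simp add: is_kernel_def is_cokernel_def)

lemma mono_opposite: "mono (opposite C) m \<longleftrightarrow> epi C m"
  by (auto simp: mono_def epi_def)

lemma fully_invariant_opposite: "fully_invariant (opposite C) k \<longleftrightarrow> fully_coinvariant C k"
  by (simp add: fully_invariant_def fully_coinvariant_def mono_opposite)

lemma is_section_opposite: "is_section (opposite C) f \<longleftrightarrow> is_retraction C f"
  by (simp add: is_section_def is_retraction_def)

lemma strongly_rickart_opposite:
  "strongly_rickart (opposite C) N M \<longleftrightarrow> dual_strongly_rickart C M N"
  by (simp add: strongly_rickart_def dual_strongly_rickart_def is_kernel_opposite
      fully_invariant_opposite is_section_opposite)

lemma is_product_opposite: "is_product (opposite C) I M S s \<longleftrightarrow> is_coproduct C I M S s"
  by (simp add: is_product_def is_coproduct_def)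

definition is_retract :: "('o, 'm) acat \<Rightarrow> 'o \<Rightarrow> 'o \<Rightarrow> bool" where
  "is_retract C A B \<longleftrightarrow> (\<exists>e \<in> Hom C A B. \<exists>p \<in> Hom C B A. cmp C p e = idm C A)"

locale preadditive_category =
  fixes C :: "('o, 'm) acat"
  assumes preadditive: "is_preadditive C"
begin

lemma category: "is_category C"
  using preadditive unfolding is_preadditive_def by blast

lemma Hom_iff [simp]: "f \<in> Hom C X Y \<longleftrightarrow> f \<in> ar C \<and> src C f = X \<and> tgt C f = Y"
  by (simp add: Hom_def)

lemma src_ob [simp]: "f \<in> ar C \<Longrightarrow> src C f \<in> ob C"
  and tgt_ob [simp]: "f \<in> ar C \<Longrightarrow> tgt C f \<in> ob C"
  using category unfolding is_category_def by blast+

lemma cmp_Hom: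
  assumes "f \<in> ar C" "g \<in> ar C" "tgt C f = src C g"
  shows "cmp C g f \<in> Hom C (src C f) (tgt C g)"
  using category assms unfolding is_category_def by (metis Hom_iff src_ob tgt_ob)

lemma cmp_ar [simp]: "f \<in> ar C \<Longrightarrow> g \<in> ar C \<Longrightarrow> tgt C f = src C g \<Longrightarrow> cmp C g f \<in> ar C"
  and cmp_src [simp]: "f \<in> ar C \<Longrightarrow> g \<in> ar C \<Longrightarrow> tgt C f = src C g \<Longrightarrow> src C (cmp C g f) = src C f"
  and cmp_tgt [simp]: "f \<in> ar C \<Longrightarrow> g \<in> ar C \<Longrightarrow> tgt C f = src C g \<Longrightarrow> tgt C (cmp C g f) = tgt C g"
  using cmp_Hom by simp_all

lemma cmp_assoc [simp]:
  "f \<in> ar C \<Longrightarrow> g \<in> ar C \<Longrightarrow> h \<in> ar C \<Longrightarrow> tgt C f = src C g \<Longrightarrow> tgt C g = src C h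
   \<Longrightarrow> cmp C (cmp C h g) f = cmp C h (cmp C g f)"
  using category unfolding is_category_def by metis

lemma idm_Hom: "X \<in> ob C \<Longrightarrow> idm C X \<in> Hom C X X"
  using category unfolding is_category_def by blast

lemma idm_ar [simp]: "X \<in> ob C \<Longrightarrow> idm C X \<in> ar C"
  and idm_src [simp]: "X \<in> ob C \<Longrightarrow> src C (idm C X) = X"
  and idm_tgt [simp]: "X \<in> ob C \<Longrightarrow> tgt C (idm C X) = X"
  using idm_Hom by simp_all

lemma cmp_idm [simp]: "f \<in> ar C \<Longrightarrow> src C f = X \<Longrightarrow> cmp C f (idm C X) = f"
  and idm_cmp [simp]: "f \<in> ar C \<Longrightarrow> tgt C f = X \<Longrightarrow> cmp C (idm C X) f = f"
  using category unfolding is_category_def by blast+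

lemma comm_group_hom_group: "X \<in> ob C \<Longrightarrow> Y \<in> ob C \<Longrightarrow> comm_group (hom_group C X Y)"
  using preadditive unfolding is_preadditive_def by blast

lemma zer_Hom:
  assumes "X \<in> ob C" "Y \<in> ob C"
  shows "zer C X Y \<in> Hom C X Y"
proof -
  interpret comm_group "hom_group C X Y" using comm_group_hom_group assms .
  show ?thesis using one_closed by (simp add: hom_group_def)
qed

lemma zer_ar [simp]: "X \<in> ob C \<Longrightarrow> Y \<in> ob C \<Longrightarrow> zer C X Y \<in> ar C"
  and zer_src [simp]: "X \<in> ob C \<Longrightarrow> Y \<in> ob C \<Longrightarrow> src C (zer C X Y) = X"
  and zer_tgt [simp]: "X \<in> ob C \<Longrightarrow> Y \<in> ob C \<Longrightarrow> tgt C (zer C X Y) = Y"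
  using zer_Hom by simp_all

lemma cmp_zer [simp]:
  assumes "g \<in> ar C" "src C g = Y" "X \<in> ob C"
  shows "cmp C g (zer C X Y) = zer C X (tgt C g)"
proof -
  let ?Z = "tgt C g"
  have ob: "Y \<in> ob C" "?Z \<in> ob C" using assms by auto
  interpret XY: comm_group "hom_group C X Y" using comm_group_hom_group assms(3) ob(1) .
  interpret XZ: comm_group "hom_group C X ?Z" using comm_group_hom_group assms(3) ob(2) .
  have "add C (zer C X Y) (zer C X Y) = zer C X Y"
    using XY.l_one zer_Hom[OF assms(3) ob(1)] by (simp add: hom_group_def)
  moreover have "cmp C g (add C (zer C X Y) (zer C X Y))
      = add C (cmp C g (zer C X Y)) (cmp C g (zer C X Y))"
    using preadditive assms ob zer_Hom[of X Y] unfolding is_preadditive_def by (metis Hom_iff)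
  ultimately have "cmp C g (zer C X Y) = add C (cmp C g (zer C X Y)) (cmp C g (zer C X Y))"
    by simp
  moreover have "cmp C g (zer C X Y) \<in> carrier (hom_group C X ?Z)"
    using assms ob by (simp add: hom_group_def)
  ultimately show ?thesis using XZ.l_cancel_one' by (simp add: hom_group_def)
qed

lemma preadditive_category_opposite: "preadditive_category (opposite C)"
  using is_preadditive_opposite preadditive by unfold_locales

lemma zer_cmp [simp]:
  assumes "f \<in> ar C" "tgt C f = Y" "Z \<in> ob C"
  shows "cmp C (zer C Y Z) f = zer C (src C f) Z"
  using preadditive_category.cmp_zer[OF preadditive_category_opposite] assms by simp

lemma kernelD:
  assumes "is_kernel C f k"
  shows "k \<in> ar C" "f \<in> ar C" "tgt C k = src C f" "cmp C f k = zer C (src C k) (tgt C f)"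
  using assms unfolding is_kernel_def by auto

lemma kernel_factor:
  assumes "is_kernel C f k" "g \<in> ar C" "tgt C g = src C f"
    and "cmp C f g = zer C (src C g) (tgt C f)"
  obtains u where "u \<in> Hom C (src C g) (src C k)" "cmp C k u = g"
  using assms unfolding is_kernel_def by blast

lemma kernel_mono:
  assumes "is_kernel C f k"
  shows "mono C k"
  unfolding mono_def
proof (intro conjI ballI impI)
  note k = kernelD[OF assms]
  show "k \<in> ar C" using k by simp
  fix g h assume g: "g \<in> ar C" "tgt C g = src C k" and h: "h \<in> ar C" "tgt C h = src C k"
    and src_eq: "src C g = src C h" and eq: "cmp C k g = cmp C k h"
  have "cmp C f (cmp C k g) = zer C (src C (cmp C k g)) (tgt C f)"
    using k g by (metis cmp_assoc cmp_src zer_cmp tgt_ob)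
  with assms k g have "\<exists>!u. u \<in> Hom C (src C g) (src C k) \<and> cmp C k u = cmp C k g"
    unfolding is_kernel_def by (metis cmp_ar cmp_src cmp_tgt)
  then show "g = h" using g h src_eq eq by auto
qed

lemma mono_cancel:
  "mono C m \<Longrightarrow> g \<in> Hom C X (src C m) \<Longrightarrow> h \<in> Hom C X (src C m) \<Longrightarrow> cmp C m g = cmp C m h
   \<Longrightarrow> g = h"
  unfolding mono_def by auto

lemma cmp_left_inverse_cancel:
  assumes "e \<in> Hom C M P" "p \<in> Hom C P M" "cmp C p e = idm C M" "x \<in> ar C" "tgt C x = M"
  shows "cmp C p (cmp C e x) = x"
  using assms by (metis Hom_iff cmp_assoc idm_cmp)

lemma is_section_transfer:
  assumes kg: "is_section C kg" "kg \<in> Hom C K' P"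
    and k: "k \<in> Hom C K M" and e: "e \<in> Hom C M P"
    and \<phi>: "\<phi> \<in> Hom C K K'" "cmp C kg \<phi> = cmp C e k"
    and \<psi>: "\<psi> \<in> Hom C K' K" "cmp C \<psi> \<phi> = idm C K"
  shows "is_section C k"
proof -
  obtain r where r: "r \<in> Hom C P K'" "cmp C r kg = idm C K'"
    using kg unfolding is_section_def by auto
  have "cmp C (cmp C \<psi> (cmp C r e)) k = cmp C \<psi> (cmp C r (cmp C e k))"
    using r k e \<psi> by simp
  also have "\<dots> = cmp C \<psi> (cmp C r (cmp C kg \<phi>))"
    using \<phi>(2) by simp
  also have "\<dots> = cmp C \<psi> (cmp C (cmp C r kg) \<phi>)"
    using r(1) kg(2) \<phi>(1) by simp
  also have "\<dots> = idm C K"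
    using r \<phi> \<psi> by simp
  finally show ?thesis
    unfolding is_section_def using k e r \<psi> by (auto intro!: bexI[of _ "cmp C \<psi> (cmp C r e)"])
qed

lemma fully_invariant_transfer:
  assumes kg: "fully_invariant C kg" "kg \<in> Hom C K' P"
    and k: "mono C k" "k \<in> Hom C K M"
    and retract: "e \<in> Hom C M P" "p \<in> Hom C P M" "cmp C p e = idm C M"
    and \<phi>: "\<phi> \<in> Hom C K K'" "cmp C kg \<phi> = cmp C e k"
    and \<psi>: "\<psi> \<in> Hom C K' K" "cmp C k \<psi> = cmp C p kg"
  shows "fully_invariant C k"
  unfolding fully_invariant_def
proof (intro conjI k(1) ballI)
  fix h assume h: "h \<in> Hom C (tgt C k) (tgt C k)"
  have "src C kg = K'" "tgt C kg = P" using kg(2) by simp_all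
  then have "\<forall>H \<in> Hom C P P. \<exists>\<beta> \<in> Hom C K' K'. cmp C H kg = cmp C kg \<beta>"
    using kg(1) unfolding fully_invariant_def by blast
  moreover have "cmp C e (cmp C h p) \<in> Hom C P P"
    using h k retract by simp
  ultimately obtain \<beta> where \<beta>: "\<beta> \<in> Hom C K' K'" "cmp C (cmp C e (cmp C h p)) kg = cmp C kg \<beta>"
    by blast
  have "cmp C k (cmp C \<psi> (cmp C \<beta> \<phi>)) = cmp C (cmp C k \<psi>) (cmp C \<beta> \<phi>)"
    using k(2) \<psi>(1) \<beta>(1) \<phi>(1) by simp
  also have "\<dots> = cmp C p (cmp C (cmp C kg \<beta>) \<phi>)"
    using \<psi> retract kg \<beta> \<phi> by simp
  also have "\<dots> = cmp C p (cmp C (cmp C (cmp C e (cmp C h p)) kg) \<phi>)"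
    by (simp only: \<beta>(2))
  also have "\<dots> = cmp C p (cmp C e (cmp C h (cmp C p (cmp C e k))))"
    using retract(1,2) h k(2) kg(2) \<phi> by simp
  also have "\<dots> = cmp C h k"
    using retract h k(2) by (simp add: cmp_left_inverse_cancel)
  finally show "\<exists>\<alpha> \<in> Hom C (src C k) (src C k). cmp C h k = cmp C k \<alpha>"
    using k \<psi> \<beta> \<phi> by (auto intro!: bexI[of _ "cmp C \<psi> (cmp C \<beta> \<phi>)"])
qed

lemma strongly_rickart_retract:
  assumes kernels: "\<forall>f \<in> ar C. \<exists>k. is_kernel C f k"
    and rickart: "strongly_rickart C P Q"
    and "is_retract C M P" "is_retract C N Q"
  shows "strongly_rickart C M N"
  unfolding strongly_rickart_def
proof (intro ballI allI impI)
  fix f k assume f: "f \<in> Hom C M N" and ker: "is_kernel C f k"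
  obtain e p where e: "e \<in> Hom C M P" "p \<in> Hom C P M" "cmp C p e = idm C M"
    using assms(3) unfolding is_retract_def by blast
  obtain e' p' where e': "e' \<in> Hom C N Q" "p' \<in> Hom C Q N" "cmp C p' e' = idm C N"
    using assms(4) unfolding is_retract_def by blast
  define g where "g = cmp C e' (cmp C f p)"
  have g: "g \<in> Hom C P Q" using e e' f by (simp add: g_def)
  then obtain kg where ker_g: "is_kernel C g kg" using kernels by auto
  with rickart g have kg_rickart: "fully_invariant C kg" "is_section C kg"
    unfolding strongly_rickart_def by blast+
  define K K' where "K = src C k" and "K' = src C kg"
  have k: "k \<in> Hom C K M" "cmp C f k = zer C K N"
    using kernelD[OF ker] f by (simp_all add: K_def)
  have kg: "kg \<in> Hom C K' P" "cmp C g kg = zer C K' Q"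
    using kernelD[OF ker_g] g by (simp_all add: K'_def)
  have ob: "K \<in> ob C" "K' \<in> ob C" using k kg by (metis Hom_iff src_ob)+
  have "cmp C g (cmp C e k) = zer C K Q"
    using e e' f k ob by (simp add: g_def cmp_left_inverse_cancel)
  then obtain \<phi> where \<phi>: "\<phi> \<in> Hom C K K'" "cmp C kg \<phi> = cmp C e k"
    using kernel_factor[OF ker_g, of "cmp C e k"] e g k kg by auto
  have "cmp C f (cmp C p kg) = cmp C p' (cmp C g kg)"
    using e e' f kg(1) by (simp add: g_def cmp_left_inverse_cancel)
  then have "cmp C f (cmp C p kg) = zer C K' N"
    using kg e' ob by simp
  then obtain \<psi> where \<psi>: "\<psi> \<in> Hom C K' K" "cmp C k \<psi> = cmp C p kg"
    using kernel_factor[OF ker, of "cmp C p kg"] e f k kg by auto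
  have "cmp C k (cmp C \<psi> \<phi>) = cmp C p (cmp C kg \<phi>)"
    using k \<psi> \<phi> e kg by (metis Hom_iff cmp_assoc)
  also have "\<dots> = cmp C k (idm C K)"
    using \<phi> e k by (simp add: cmp_left_inverse_cancel)
  finally have "cmp C \<psi> \<phi> = idm C K"
    by (rule mono_cancel[OF kernel_mono[OF ker], rotated 2]) (use k \<psi> \<phi> ob in simp_all)
  then show "fully_invariant C k \<and> is_section C k"
    using fully_invariant_transfer[OF kg_rickart(1) kg(1) kernel_mono[OF ker] k(1) e \<phi> \<psi>]
      is_section_transfer[OF kg_rickart(2) kg(1) k(1) e(1) \<phi> \<psi>(1)] by blast
qed

lemma is_product_lift:
  assumes "is_product C I M P p" "X \<in> ob C" "\<forall>i \<in> I. f i \<in> Hom C X (M i)"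
  obtains u where "u \<in> Hom C X P" "\<forall>i \<in> I. cmp C (p i) u = f i"
  using assms unfolding is_product_def by blast

lemma is_retract_product:
  assumes prod: "is_product C I M P p" and a: "a \<in> I" and ob: "\<forall>i \<in> I. M i \<in> ob C"
  shows "is_retract C (M a) P"
proof -
  let ?f = "\<lambda>i. if i = a then idm C (M a) else zer C (M a) (M i)"
  have "M a \<in> ob C" "\<forall>i \<in> I. ?f i \<in> Hom C (M a) (M i)" using ob a by auto
  then obtain u where u: "u \<in> Hom C (M a) P" "\<forall>i \<in> I. cmp C (p i) u = ?f i"
    by (rule is_product_lift[OF prod])
  have "p a \<in> Hom C P (M a)" using prod a unfolding is_product_def by blast
  moreover have "cmp C (p a) u = idm C (M a)" using u a by simp
  ultimately show ?thesis unfolding is_retract_def using u(1) by blast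
qed

lemma strongly_rickart_product_components:
  assumes "\<forall>f \<in> ar C. \<exists>k. is_kernel C f k" and "\<forall>i \<in> I. M i \<in> ob C"
    and "is_product C I M P p" "strongly_rickart C P P" and "i \<in> I" "j \<in> I"
  shows "strongly_rickart C (M j) (M i)"
  using assms by (blast intro: strongly_rickart_retract is_retract_product)

end

theorem proposition3p4:
  fixes C :: "('o, 'm) acat" and I :: "'i set" and M :: "'i \<Rightarrow> 'o"
  assumes "is_abelian C"
    and "\<forall>i \<in> I. M i \<in> ob C"
  shows "(\<forall>P p. is_product C I M P p \<and> strongly_rickart C P P \<longrightarrow>
            (\<forall>i \<in> I. \<forall>j \<in> I. strongly_rickart C (M j) (M i)))
       \<and> (\<forall>S s. is_coproduct C I M S s \<and> dual_strongly_rickart C S S \<longrightarrow>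
            (\<forall>i \<in> I. \<forall>j \<in> I. dual_strongly_rickart C (M j) (M i)))"
proof -
  have C: "preadditive_category C"
    using assms(1) unfolding is_abelian_def by (simp add: preadditive_category_def)
  then have C_op: "preadditive_category (opposite C)"
    by (rule preadditive_category.preadditive_category_opposite)
  have kernels: "\<forall>f \<in> ar C. \<exists>k. is_kernel C f k"
    and cokernels: "\<forall>f \<in> ar (opposite C). \<exists>k. is_kernel (opposite C) f k"
    using assms(1) unfolding is_abelian_def is_kernel_opposite by simp_all
  show ?thesis
  proof (intro conjI allI impI ballI)
    fix P p i j
    assume "is_product C I M P p \<and> strongly_rickart C P P" "i \<in> I" "j \<in> I"
    then show "strongly_rickart C (M j) (M i)"
      using preadditive_category.strongly_rickart_product_components[OF C kernels assms(2)]
      by blast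
  next
    fix S s i j
    assume "is_coproduct C I M S s \<and> dual_strongly_rickart C S S" "i \<in> I" "j \<in> I"
    then show "dual_strongly_rickart C (M j) (M i)"
      using preadditive_category.strongly_rickart_product_components[OF C_op cokernels, of I M S s j i]
        assms(2)
      by (simp add: is_product_opposite strongly_rickart_opposite)
  qed
qed

end
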